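(* Let $G>0$, $K>0$, $\lambda>0$, $\gamma\in(0,1)$, $R>0$, $m\ge 1$ an integer and $D_m\ge R^2/(m+1)$. Define $\kappa=G\pi(1-\gamma)/(\gamma K)$ and $\Lambda=\lambda\gamma K$. For $Z_m=(x_1,y_1,\dots,x_m,y_m)\in\mathbb{R}^{2m}$ let $$d_m(Z_m)=\Big(x_1+\tfrac R2\Big)^2+\sum_{i=1}^{m-1}(x_i-x_{i+1})^2+\Big(x_m-\tfrac R2\Big)^2+y_1^2+\sum_{i=1}^{m-1}(y_i-y_{i+1})^2+y_m^2,$$ and let $N_m$ be the number of potential relay sets $Z_m$ satisfying $d_m(Z_m)\le D_m$, as in the context. Then $$\mathbb{E}(N_m)=\frac{G\kappa^m}{m+1}\left\{\exp\!\Big(-\frac{\Lambda R^2}{m+1}\Big)-\exp(-\Lambda D_m)\sum_{i=0}^{m-1}\frac{1}{i!}\Big(\Lambda\Big(D_m-\frac{R^2}{m+1}\Big)\Big)^i\right\}.$$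
   Context: Model: a typical source is at $(-R/2,0)$ and its destination at $(R/2,0)$; an end-to-end transmission uses $m+1$ hops through $m$ relays, and a relay set (ordered $m$-tuple of relays, $i$-th relay at $(x_i,y_i)$) is identified with $Z_m\in\mathbb{R}^{2m}$, so $d_m(Z_m)$ is the sum of the squared hop lengths of the route source $\to$ relay $1\to\cdots\to$ relay $m\to$ destination. Nodes form a Poisson process of intensity $\lambda$, a fraction $\gamma$ of which are active transmitters (intensity $\lambda_t=\gamma\lambda$). The relay sets form a point process on $\mathbb{R}^{2m}$ with effective intensity $\lambda^m(1-\gamma)^m$. Each hop of length $r$ succeeds independently with probability $G\exp(-\lambda_t K r^2)$, so a relay set at $Z_m$ completes forwarding (is a "potential relay set") with probability $g_m(Z_m,\lambda_t)=G^{m+1}\exp(-\lambda_t K d_m(Z_m))$. $N_m$ is the number of potential relay sets subject to the constraint $d_m(Z_m)\le D_m$, i.e. $\mathbb{E}(N_m)=\int_{\{d_m(Z)\le D_m\}}\lambda^m(1-\gamma)^m\,G^{m+1}e^{-\lambda\gamma K d_m(Z)}\,dZ$. *)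

theory Defs
  imports "HOL-Analysis.Analysis"
begin

text \<open>A relay set Z_m in R^(2m) is a function on the index set {..<2m};
  relay i (1 <= i <= m) sits at (x_i, y_i) = (Z(2(i-1)), Z(2(i-1)+1)).\<close>

definition relay_x :: "(nat \<Rightarrow> real) \<Rightarrow> nat \<Rightarrow> real" where
  "relay_x Z i = Z (2 * (i - 1))"

definition relay_y :: "(nat \<Rightarrow> real) \<Rightarrow> nat \<Rightarrow> real" where
  "relay_y Z i = Z (2 * (i - 1) + 1)"

text \<open>Sum of squared hop lengths of source (-R/2,0) -> relays 1..m -> destination (R/2,0).\<close>
definition d_m :: "real \<Rightarrow> nat \<Rightarrow> (nat \<Rightarrow> real) \<Rightarrow> real" where
  "d_m R m Z =
     (relay_x Z 1 + R/2)\<^sup>2 + (\<Sum>i=1..m-1. (relay_x Z i - relay_x Z (i+1))\<^sup>2) + (relay_x Z m - R/2)\<^sup>2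
   + (relay_y Z 1)\<^sup>2 + (\<Sum>i=1..m-1. (relay_y Z i - relay_y Z (i+1))\<^sup>2) + (relay_y Z m)\<^sup>2"

text \<open>Probability that a relay set at Z completes forwarding.\<close>
definition g_m :: "real \<Rightarrow> real \<Rightarrow> real \<Rightarrow> nat \<Rightarrow> (nat \<Rightarrow> real) \<Rightarrow> real \<Rightarrow> real" where
  "g_m G K R m Z lam_t = G ^ (m+1) * exp (- lam_t * K * d_m R m Z)"

text \<open>E(N_m): integral over {d_m(Z) <= D} of the effective intensity
  lam^m (1-gamma)^m times g_m(Z, lam*gamma), w.r.t. Lebesgue measure on R^(2m).\<close>
definition expected_N :: "real \<Rightarrow> real \<Rightarrow> real \<Rightarrow> real \<Rightarrow> real \<Rightarrow> nat \<Rightarrow> real \<Rightarrow> ennreal" where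
  "expected_N G K lam gam R m D =
     (\<integral>\<^sup>+ Z. indicator {Z. d_m R m Z \<le> D} Z *
              ennreal (lam ^ m * (1 - gam) ^ m * g_m G K R m Z (lam * gam))
        \<partial>(PiM {..<2*m} (\<lambda>_. lborel)))"

end

theory Submission
  imports Defs "HOL-Probability.Distributions"
begin

text \<open>The cost d_m is the cost of a planar path with m + 1 hops. Integrating out the last relay
  and completing the square shows, by induction on m, that the sublevel set {d_m \<le> t} has volume
  \<pi>^m / (m! (m + 1)) \<cdot> (t - R^2 / (m + 1))^m for t \<ge> R^2 / (m + 1), the minimum R^2 / (m + 1) being
  attained by equally spaced relays. With this volume function the layer-cake formula turns the
  exponentially weighted integral E(N_m) into an Erlang (incomplete Gamma) integral, whose closed
  form is the truncated exponential series.\<close>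

section \<open>Chain costs\<close>

text \<open>Cost of the path from (a1, a2) through the relays (Z 0, Z 1), ..., (Z (2n-2), Z (2n-1))
  to (b1, b2).\<close>

fun chain_cost :: "nat \<Rightarrow> real \<Rightarrow> real \<Rightarrow> real \<Rightarrow> real \<Rightarrow> (nat \<Rightarrow> real) \<Rightarrow> real" where
  "chain_cost 0 a1 a2 b1 b2 Z = (a1 - b1)\<^sup>2 + (a2 - b2)\<^sup>2"
| "chain_cost (Suc n) a1 a2 b1 b2 Z =
     chain_cost n a1 a2 (Z (2*n)) (Z (2*n+1)) Z + (Z (2*n) - b1)\<^sup>2 + (Z (2*n+1) - b2)\<^sup>2"

lemma chain_cost_cong:
  "(\<And>i. i < 2*n \<Longrightarrow> Z i = Z' i) \<Longrightarrow> chain_cost n a1 a2 b1 b2 Z = chain_cost n a1 a2 b1 b2 Z'"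
proof (induction n arbitrary: b1 b2)
  case 0
  then show ?case by simp
next
  case (Suc n)
  have "Z (2*n) = Z' (2*n)" "Z (2*n+1) = Z' (2*n+1)"
    using Suc.prems by auto
  moreover have "chain_cost n a1 a2 c1 c2 Z = chain_cost n a1 a2 c1 c2 Z'" for c1 c2
    using Suc.prems by (intro Suc.IH) auto
  ultimately show ?case by simp
qed

lemma borel_measurable_chain_cost:
  assumes "{..<2*n} \<subseteq> I"
    and "f \<in> borel_measurable (PiM I (\<lambda>_. lborel))" "g \<in> borel_measurable (PiM I (\<lambda>_. lborel))"
  shows "(\<lambda>Z. chain_cost n a1 a2 (f Z) (g Z) Z) \<in> borel_measurable (PiM I (\<lambda>_. lborel))"
  using assms
proof (induction n arbitrary: f g)
  case 0
  then show ?case by simp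
next
  case (Suc n)
  have x: "(\<lambda>Z. Z (2*n)) \<in> borel_measurable (PiM I (\<lambda>_. lborel))"
    and y: "(\<lambda>Z. Z (2*n+1)) \<in> borel_measurable (PiM I (\<lambda>_. lborel))"
    using Suc.prems by (auto intro!: measurable_PiM_component_rev)
  have "(\<lambda>Z. chain_cost n a1 a2 (Z (2*n)) (Z (2*n+1)) Z) \<in> borel_measurable (PiM I (\<lambda>_. lborel))"
    using Suc.prems x y by (intro Suc.IH) auto
  then show ?case
    unfolding chain_cost.simps power2_eq_square
    by (intro borel_measurable_add borel_measurable_times borel_measurable_diff x y Suc.prems(2,3))
qed

lemma measurable_chain_cost [measurable]:
  "chain_cost n a1 a2 b1 b2 \<in> borel_measurable (PiM {..<2*n} (\<lambda>_. lborel))"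
  using borel_measurable_chain_cost[of n "{..<2*n}" "\<lambda>_. b1" "\<lambda>_. b2"] by simp

lemma chain_cost_Suc_eq_sum:
  "chain_cost (Suc n) a1 a2 b1 b2 Z = (Z 0 - a1)\<^sup>2 + (Z 1 - a2)\<^sup>2
     + (\<Sum>i=1..n. (Z (2*(i-1)) - Z (2*i))\<^sup>2 + (Z (2*(i-1)+1) - Z (2*i+1))\<^sup>2)
     + (Z (2*n) - b1)\<^sup>2 + (Z (2*n+1) - b2)\<^sup>2"
proof (induction n arbitrary: b1 b2)
  case 0
  then show ?case by (simp add: power2_commute)
next
  case (Suc n)
  show ?case
    using Suc.IH[of "Z (2 * Suc n)" "Z (2 * Suc n + 1)"] by (simp add: algebra_simps)
qed

lemma d_m_eq_chain_cost:
  assumes "m \<ge> 1"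
  shows "d_m R m = chain_cost m (-R/2) 0 (R/2) 0"
proof
  fix Z
  obtain n where m: "m = Suc n"
    using assms by (cases m) auto
  have "d_m R m Z = (Z 0 + R/2)\<^sup>2 + (\<Sum>i=1..n. (Z (2*(i-1)) - Z (2*i))\<^sup>2) + (Z (2*n) - R/2)\<^sup>2
     + (Z 1)\<^sup>2 + (\<Sum>i=1..n. (Z (2*(i-1)+1) - Z (2*i+1))\<^sup>2) + (Z (2*n+1))\<^sup>2"
    unfolding d_m_def relay_x_def relay_y_def m
    by (auto intro!: sum.cong simp: algebra_simps)
  also have "\<dots> = chain_cost m (-R/2) 0 (R/2) 0 Z"
    unfolding m chain_cost_Suc_eq_sum by (simp add: sum.distrib algebra_simps)
  finally show "d_m R m Z = chain_cost m (-R/2) 0 (R/2) 0 Z" .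
qed

section \<open>Integrals over the plane\<close>

lemma Beta_half_mult_Beta_half:
  "Beta (1/2) (real n + 1) * Beta (1/2) (real n + 3/2) = pi / (real n + 1)"
proof -
  have g1: "Gamma (real n + 1) = fact n"
    using Gamma_fact[of n] by (simp add: add.commute)
  have g2: "Gamma (real n + 2) = fact (Suc n)"
    using Gamma_fact[of "Suc n"] by (simp add: add.commute)
  have pos: "Gamma (real n + 3/2) > 0"
    by (intro Gamma_real_pos) simp
  have e1: "1/2 + (real n + 1) = real n + 3/2" and e2: "1/2 + (real n + 3/2) = real n + 2"
    by simp_all
  have "sqrt pi * fact n / g * (sqrt pi * g / fact (Suc n)) = pi / (real n + 1)"
    if "g \<noteq> 0" for g :: real
  proof -
    have "fact n * (real n + 1) \<noteq> 0" by simp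
    then show ?thesis using that by (simp add: divide_simps)
  qed
  from this[of "Gamma (real n + 3/2)"] show ?thesis
    unfolding Beta_def e1 e2 g1 g2 Gamma_one_half_real using pos
    by (simp add: mult_ac less_imp_neq[symmetric])
qed

lemma nn_integral_sqrt_diff_square_power:
  assumes "A > 0"
  shows "(\<integral>\<^sup>+u. ennreal (indicator {-sqrt A..sqrt A} u * sqrt (A - u\<^sup>2) ^ k) \<partial>lborel)
     = ennreal (sqrt A ^ (k+1) * Beta (1/2) (real k / 2 + 1))"
proof -
  have sA: "sqrt A > 0" using assms by simp
  have "(\<integral>\<^sup>+u. ennreal (indicator {-sqrt A..sqrt A} u * sqrt (A - u\<^sup>2) ^ k) \<partial>lborel)
     = ennreal (sqrt A) * (\<integral>\<^sup>+x. ennreal (indicator {-sqrt A..sqrt A} (sqrt A * x)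
         * sqrt (A - (sqrt A * x)\<^sup>2) ^ k) \<partial>lborel)"
    using sA by (subst nn_integral_real_affine[where c="sqrt A" and t=0]) auto
  also have "(\<lambda>x. ennreal (indicator {-sqrt A..sqrt A} (sqrt A * x) * sqrt (A - (sqrt A * x)\<^sup>2) ^ k))
      = (\<lambda>x. ennreal (sqrt A ^ k) * ennreal (indicator {-1..1} x * sqrt (1 - x\<^sup>2) ^ k))"
  proof
    fix x
    have "A - (sqrt A * x)\<^sup>2 = A * (1 - x\<^sup>2)"
      using assms by (simp add: power_mult_distrib algebra_simps)
    then have s: "sqrt (A - (sqrt A * x)\<^sup>2) = sqrt A * sqrt (1 - x\<^sup>2)"
      by (simp add: real_sqrt_mult)
    have "(-sqrt A \<le> sqrt A * x) = (sqrt A * (-1) \<le> sqrt A * x)"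
      and "(sqrt A * x \<le> sqrt A) = (sqrt A * x \<le> sqrt A * 1)"
      by simp_all
    then have i: "(sqrt A * x \<in> {-sqrt A..sqrt A}) = (x \<in> {-1..1})"
      unfolding atLeastAtMost_iff mult_le_cancel_left_pos[OF sA] by simp
    show "ennreal (indicator {-sqrt A..sqrt A} (sqrt A * x) * sqrt (A - (sqrt A * x)\<^sup>2) ^ k)
      = ennreal (sqrt A ^ k) * ennreal (indicator {-1..1} x * sqrt (1 - x\<^sup>2) ^ k)"
      unfolding s indicator_def i using sA
      by (auto simp: power_mult_distrib ennreal_mult'[symmetric] mult_ac)
  qed
  also have "(\<integral>\<^sup>+x. ennreal (sqrt A ^ k) * ennreal (indicator {-1..1} x * sqrt (1 - x\<^sup>2) ^ k) \<partial>lborel)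
     = ennreal (sqrt A ^ k) * ennreal (Beta (1 / 2) (real k / 2 + 1))"
    by (subst nn_integral_cmult) (auto simp: emeasure_cball_aux_integral)
  finally show ?thesis
    using sA by (simp add: ennreal_mult'[symmetric] mult_ac)
qed

lemma nn_integral_lborel_eq_0_off_0:
  assumes "\<And>u. u \<noteq> 0 \<Longrightarrow> f u = 0"
  shows "(\<integral>\<^sup>+u. ennreal (f u) \<partial>lborel) = 0"
proof -
  have "AE u in lborel. u \<noteq> 0"
    by (intro AE_not_in[of "{0}", simplified]) auto
  then have "AE u in lborel. ennreal (f u) = 0"
    by eventually_elim (use assms in auto)
  from nn_integral_cong_AE[OF this] show ?thesis by simp
qed

lemma nn_integral_lborel_translate:
  fixes f :: "real \<Rightarrow> ennreal"
  assumes [measurable]: "f \<in> borel_measurable borel"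
  shows "(\<integral>\<^sup>+u. f (u - p) \<partial>lborel) = (\<integral>\<^sup>+u. f u \<partial>lborel)"
  using nn_integral_real_affine[of "\<lambda>u. f (u - p)" 1 p] by simp

definition disk_power :: "real \<Rightarrow> nat \<Rightarrow> real \<Rightarrow> real \<Rightarrow> real" where
  "disk_power \<rho> n u v = (if u\<^sup>2 + v\<^sup>2 \<le> \<rho> then (\<rho> - u\<^sup>2 - v\<^sup>2) ^ n else 0)"

lemma measurable_disk_power [measurable]: "(\<lambda>u. disk_power \<rho> n u v) \<in> borel_measurable borel"
  unfolding disk_power_def by measurable

lemma nn_integral_disk_power_section:
  assumes "\<rho> > 0"
  shows "(\<integral>\<^sup>+u. ennreal (disk_power \<rho> n u v) \<partial>lborel)
    = ennreal (Beta (1/2) (real n + 1) * (indicator {-sqrt \<rho>..sqrt \<rho>} v * sqrt (\<rho> - v\<^sup>2) ^ (2*n+1)))"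
proof (cases "v\<^sup>2 < \<rho>")
  case True
  define A where "A = \<rho> - v\<^sup>2"
  have A: "A > 0" using True by (simp add: A_def)
  have "disk_power \<rho> n u v = indicator {-sqrt A..sqrt A} u * sqrt (A - u\<^sup>2) ^ (2*n)" for u
  proof -
    have "(u\<^sup>2 + v\<^sup>2 \<le> \<rho>) = (u \<in> {-sqrt A..sqrt A})"
      unfolding A_def atLeastAtMost_iff
      by (metis abs_le_iff add.commute le_diff_eq minus_le_iff real_sqrt_abs real_sqrt_le_iff)
    moreover have "u\<^sup>2 \<le> A \<Longrightarrow> sqrt (A - u\<^sup>2) ^ (2*n) = (A - u\<^sup>2) ^ n"
      by (simp add: power_mult)
    ultimately show ?thesis
      unfolding disk_power_def A_def indicator_def by (auto simp: algebra_simps)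
  qed
  then have "(\<integral>\<^sup>+u. ennreal (disk_power \<rho> n u v) \<partial>lborel)
     = (\<integral>\<^sup>+u. ennreal (indicator {-sqrt A..sqrt A} u * sqrt (A - u\<^sup>2) ^ (2*n)) \<partial>lborel)"
    by simp
  also have "\<dots> = ennreal (sqrt A ^ (2*n+1) * Beta (1/2) (real (2*n) / 2 + 1))"
    by (rule nn_integral_sqrt_diff_square_power[OF A])
  also have "v \<in> {-sqrt \<rho>..sqrt \<rho>}"
    using True
    by (metis abs_le_iff atLeastAtMost_iff less_eq_real_def minus_le_iff real_sqrt_abs real_sqrt_le_iff)
  ultimately show ?thesis by (simp add: A_def mult_ac)
next
  case False
  have "(\<integral>\<^sup>+u. ennreal (disk_power \<rho> n u v) \<partial>lborel) = 0"
  proof (rule nn_integral_lborel_eq_0_off_0)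
    fix u :: real
    assume "u \<noteq> 0"
    then have "u\<^sup>2 > 0" by simp
    then have "\<not> u\<^sup>2 + v\<^sup>2 \<le> \<rho>"
      using False by linarith
    then show "disk_power \<rho> n u v = 0"
      unfolding disk_power_def by auto
  qed
  moreover have "indicator {-sqrt \<rho>..sqrt \<rho>} v * sqrt (\<rho> - v\<^sup>2) ^ (2*n+1) = (0::real)"
  proof (cases "v\<^sup>2 = \<rho>")
    case False
    then have "v\<^sup>2 > \<rho>" using \<open>\<not> v\<^sup>2 < \<rho>\<close> by simp
    then have "v \<notin> {-sqrt \<rho>..sqrt \<rho>}"
      by (metis abs_le_iff atLeastAtMost_iff minus_le_iff not_less real_sqrt_abs real_sqrt_le_iff)
    then show ?thesis by simp
  qed simp
  ultimately show ?thesis by (metis mult_zero_right ennreal_0)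
qed

lemma nn_integral_disk_power:
  assumes "\<rho> > 0"
  shows "(\<integral>\<^sup>+v. \<integral>\<^sup>+u. ennreal (disk_power \<rho> n u v) \<partial>lborel \<partial>lborel) = ennreal (pi * \<rho> ^ (n+1) / (real n + 1))"
proof -
  have B0: "Beta (1/2) (real n + 1) \<ge> 0"
    unfolding Beta_def by (intro divide_nonneg_pos mult_nonneg_nonneg) (auto intro: less_imp_le)
  have "(\<integral>\<^sup>+v. \<integral>\<^sup>+u. ennreal (disk_power \<rho> n u v) \<partial>lborel \<partial>lborel)
     = (\<integral>\<^sup>+v. ennreal (Beta (1/2) (real n + 1))
         * ennreal (indicator {-sqrt \<rho>..sqrt \<rho>} v * sqrt (\<rho> - v\<^sup>2) ^ (2*n+1)) \<partial>lborel)"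
    using B0 by (intro nn_integral_cong) (simp add: nn_integral_disk_power_section[OF assms] ennreal_mult')
  also have "\<dots> = ennreal (Beta (1/2) (real n + 1))
      * ennreal (sqrt \<rho> ^ (2*n+1+1) * Beta (1/2) (real (2*n+1) / 2 + 1))"
    by (subst nn_integral_cmult, simp, subst nn_integral_sqrt_diff_square_power[OF assms], rule refl)
  also have "sqrt \<rho> ^ (2*n+1+1) = \<rho> ^ (n+1)"
  proof -
    have "sqrt \<rho> ^ (2*n+1+1) = (sqrt \<rho> ^ 2) ^ (n+1)"
      unfolding power_mult[symmetric] by (simp add: algebra_simps)
    then show ?thesis using assms by simp
  qed
  also have "real (2*n+1) / 2 + 1 = real n + 3/2"
    by (simp add: field_simps)
  also have "ennreal (Beta (1/2) (real n + 1)) * ennreal (\<rho> ^ (n+1) * Beta (1/2) (real n + 3/2))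
       = ennreal (Beta (1/2) (real n + 1) * Beta (1/2) (real n + 3/2) * \<rho> ^ (n+1))"
    using B0 by (simp add: ennreal_mult'[symmetric] mult_ac)
  also note Beta_half_mult_Beta_half
  finally show ?thesis by simp
qed

lemma nn_integral_disk_power_translate:
  assumes "\<rho> > 0"
  shows "(\<integral>\<^sup>+v. \<integral>\<^sup>+u. ennreal (disk_power \<rho> n (u - p1) (v - p2)) \<partial>lborel \<partial>lborel)
    = (\<integral>\<^sup>+v. \<integral>\<^sup>+u. ennreal (disk_power \<rho> n u v) \<partial>lborel \<partial>lborel)"
proof -
  let ?g = "\<lambda>v. ennreal (Beta (1/2) (real n + 1)
             * (indicator {-sqrt \<rho>..sqrt \<rho>} v * sqrt (\<rho> - v\<^sup>2) ^ (2*n+1)))"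
  have "(\<integral>\<^sup>+v. \<integral>\<^sup>+u. ennreal (disk_power \<rho> n (u - p1) (v - p2)) \<partial>lborel \<partial>lborel)
      = (\<integral>\<^sup>+v. ?g (v - p2) \<partial>lborel)"
    by (intro nn_integral_cong)
      (simp add: nn_integral_lborel_translate[of "\<lambda>u. ennreal (disk_power \<rho> n u _)"]
        nn_integral_disk_power_section[OF assms])
  also have "\<dots> = (\<integral>\<^sup>+v. ?g v \<partial>lborel)"
    by (rule nn_integral_lborel_translate) measurable
  finally show ?thesis
    by (simp add: nn_integral_disk_power_section[OF assms])
qed

lemma nn_integral_plane_quadratic_power:
  assumes q: "q > 0"
  shows "(\<integral>\<^sup>+v. \<integral>\<^sup>+u. ennreal (if q * ((u-p1)\<^sup>2 + (v-p2)\<^sup>2) \<le> T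
                       then (T - q * ((u-p1)\<^sup>2 + (v-p2)\<^sup>2)) ^ n else 0) \<partial>lborel \<partial>lborel)
     = ennreal (if T > 0 then pi * T ^ (n+1) / (q * (real n + 1)) else 0)"
proof -
  have eq: "(if q * ((u-p1)\<^sup>2 + (v-p2)\<^sup>2) \<le> T then (T - q * ((u-p1)\<^sup>2 + (v-p2)\<^sup>2)) ^ n else 0)
      = q ^ n * disk_power (T/q) n (u - p1) (v - p2)" for u v
  proof -
    have "(q * ((u-p1)\<^sup>2 + (v-p2)\<^sup>2) \<le> T) = ((u-p1)\<^sup>2 + (v-p2)\<^sup>2 \<le> T/q)"
      using q by (simp add: pos_le_divide_eq mult.commute)
    moreover have "T - q * ((u-p1)\<^sup>2 + (v-p2)\<^sup>2) = q * (T/q - (u-p1)\<^sup>2 - (v-p2)\<^sup>2)"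
      using q by (simp add: field_simps)
    ultimately show ?thesis
      unfolding disk_power_def by (simp add: power_mult_distrib)
  qed
  have "(\<integral>\<^sup>+v. \<integral>\<^sup>+u. ennreal (if q * ((u-p1)\<^sup>2 + (v-p2)\<^sup>2) \<le> T
                       then (T - q * ((u-p1)\<^sup>2 + (v-p2)\<^sup>2)) ^ n else 0) \<partial>lborel \<partial>lborel)
     = (\<integral>\<^sup>+v. \<integral>\<^sup>+u. ennreal (q ^ n) * ennreal (disk_power (T/q) n (u - p1) (v - p2)) \<partial>lborel \<partial>lborel)"
    unfolding eq using q by (intro nn_integral_cong) (simp add: ennreal_mult')
  also have "\<dots> = ennreal (q ^ n) * (\<integral>\<^sup>+v. \<integral>\<^sup>+u. ennreal (disk_power (T/q) n (u - p1) (v - p2)) \<partial>lborel \<partial>lborel)"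
  proof -
    have "(\<lambda>v. \<integral>\<^sup>+u. ennreal (disk_power (T/q) n (u - p1) (v - p2)) \<partial>lborel) \<in> borel_measurable lborel"
      unfolding disk_power_def by measurable
    then show ?thesis by (simp add: nn_integral_cmult)
  qed
  also have "\<dots> = ennreal (if T > 0 then pi * T ^ (n+1) / (q * (real n + 1)) else 0)"
  proof (cases "T > 0")
    case True
    then have "T/q > 0" using q by simp
    then have "ennreal (q ^ n) * (\<integral>\<^sup>+v. \<integral>\<^sup>+u. ennreal (disk_power (T/q) n (u - p1) (v - p2)) \<partial>lborel \<partial>lborel)
       = ennreal (q ^ n * (pi * (T/q) ^ (n+1) / (real n + 1)))"
      using q by (simp add: nn_integral_disk_power_translate nn_integral_disk_power ennreal_mult'[symmetric])
    also have "q ^ n * (pi * (T/q) ^ (n+1) / (real n + 1)) = pi * T ^ (n+1) / (q * (real n + 1))"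
      using q by (simp add: power_divide divide_simps)
    finally show ?thesis using True by simp
  next
    case False
    have "(\<integral>\<^sup>+u. ennreal (disk_power (T/q) n (u - p1) (v - p2)) \<partial>lborel) = 0" for v
    proof -
      have "(\<integral>\<^sup>+u. ennreal (disk_power (T/q) n (u - p1) (v - p2)) \<partial>lborel)
          = (\<integral>\<^sup>+u. ennreal (disk_power (T/q) n u (v - p2)) \<partial>lborel)"
        by (rule nn_integral_lborel_translate[of "\<lambda>u. ennreal (disk_power (T/q) n u (v - p2))"]) measurable
      also have "\<dots> = 0"
      proof (rule nn_integral_lborel_eq_0_off_0)
        fix u :: real
        assume "u \<noteq> 0"
        then have "u\<^sup>2 > 0" by simp
        moreover have "T/q \<le> 0" using False q by (simp add: divide_nonpos_pos)
        moreover have "(v-p2)\<^sup>2 \<ge> 0" by simp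
        ultimately have "\<not> u\<^sup>2 + (v-p2)\<^sup>2 \<le> T/q" by linarith
        then show "disk_power (T/q) n u (v - p2) = 0"
          unfolding disk_power_def by simp
      qed
      finally show ?thesis .
    qed
    then show ?thesis using False by simp
  qed
  finally show ?thesis .
qed

section \<open>Volume of the sublevel sets of the chain cost\<close>

lemma weighted_squares_complete_square:
  fixes N a b u :: real
  assumes "N > 0"
  shows "(a - u)\<^sup>2 / N + (u - b)\<^sup>2 = (N+1)/N * (u - (a + N*b)/(N+1))\<^sup>2 + (a - b)\<^sup>2/(N+1)"
proof -
  define w where "w = (N+1)*u - a - N*b"
  have key: "(N+1)*((a-u)\<^sup>2 + N*(u-b)\<^sup>2) = w\<^sup>2 + N*(a-b)\<^sup>2"
    unfolding w_def by algebra
  have "u - (a + N*b)/(N+1) = w/(N+1)"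
    using assms by (simp add: field_simps w_def)
  moreover have "(N+1)/N * (w/(N+1))\<^sup>2 = w\<^sup>2/(N*(N+1))"
    using assms by (simp add: power_divide power2_eq_square divide_simps)
  moreover have "(a-b)\<^sup>2/(N+1) = N*(a-b)\<^sup>2/(N*(N+1))"
    using assms by simp
  ultimately have "(N+1)/N * (u - (a + N*b)/(N+1))\<^sup>2 + (a - b)\<^sup>2/(N+1) = (w\<^sup>2 + N*(a-b)\<^sup>2) / (N*(N+1))"
    by (simp add: add_divide_distrib)
  also have "\<dots> = ((a-u)\<^sup>2 + N*(u-b)\<^sup>2) / N"
    using assms by (simp flip: key)
  also have "\<dots> = (a - u)\<^sup>2 / N + (u - b)\<^sup>2"
    using assms by (simp add: add_divide_distrib)
  finally show ?thesis by simp
qed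

lemma nn_integral_chain_cost_Suc_sublevel:
  "(\<integral>\<^sup>+Z. indicator {Z. chain_cost (Suc n) a1 a2 b1 b2 Z \<le> D} Z \<partial>PiM {..<2 * Suc n} (\<lambda>_. lborel))
   = (\<integral>\<^sup>+v. \<integral>\<^sup>+u. \<integral>\<^sup>+Z. indicator {Z. chain_cost n a1 a2 u v Z \<le> D - (u - b1)\<^sup>2 - (v - b2)\<^sup>2} Z
         \<partial>PiM {..<2*n} (\<lambda>_. lborel) \<partial>lborel \<partial>lborel)"
proof -
  interpret product_sigma_finite "\<lambda>_::nat. lborel::real measure" by standard
  define I where "I = {..<2*n}"
  have fin: "finite I" by (simp add: I_def)
  have Iset: "{..<2 * Suc n} = insert (2*n+1) (insert (2*n) I)"
    by (auto simp: I_def)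
  have cost_upd_y: "chain_cost n a1 a2 c d (Z(Suc (2*n) := v)) = chain_cost n a1 a2 c d Z" for c d Z v
    by (rule chain_cost_cong) auto
  have cost_upd_x: "chain_cost n a1 a2 u v (Z(2*n := u)) = chain_cost n a1 a2 u v Z" for Z u v
    by (rule chain_cost_cong) auto
  have [measurable]: "chain_cost (Suc n) a1 a2 b1 b2 \<in> borel_measurable (PiM (insert (2*n+1) (insert (2*n) I)) (\<lambda>_. lborel))"
    using measurable_chain_cost[of "Suc n"] Iset by simp
  have [measurable]: "(\<lambda>Z. chain_cost n a1 a2 (Z (2*n)) v Z) \<in> borel_measurable (PiM (insert (2*n) I) (\<lambda>_. lborel))" for v
    by (rule borel_measurable_chain_cost) (auto simp: I_def intro!: measurable_PiM_component_rev)
  have "(\<integral>\<^sup>+Z. indicator {Z. chain_cost (Suc n) a1 a2 b1 b2 Z \<le> D} Z \<partial>PiM {..<2 * Suc n} (\<lambda>_. lborel))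
     = (\<integral>\<^sup>+v. \<integral>\<^sup>+Z. indicator {Z. chain_cost (Suc n) a1 a2 b1 b2 Z \<le> D} (Z(2*n+1 := v))
          \<partial>PiM (insert (2*n) I) (\<lambda>_. lborel) \<partial>lborel)"
  proof -
    have "indicator {Z. chain_cost (Suc n) a1 a2 b1 b2 Z \<le> D}
        \<in> borel_measurable (PiM (insert (2*n+1) (insert (2*n) I)) (\<lambda>_. lborel))"
      by measurable
    then show ?thesis
      unfolding Iset by (rule product_nn_integral_insert_rev[rotated 2]) (auto simp: fin I_def)
  qed
  also have "\<dots> = (\<integral>\<^sup>+v. \<integral>\<^sup>+Z. indicator {Z. chain_cost n a1 a2 (Z (2*n)) v Z + (Z (2*n) - b1)\<^sup>2 + (v - b2)\<^sup>2 \<le> D} Z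
         \<partial>PiM (insert (2*n) I) (\<lambda>_. lborel) \<partial>lborel)"
    by (simp add: cost_upd_y indicator_def)
  also have "\<dots> = (\<integral>\<^sup>+v. \<integral>\<^sup>+u. \<integral>\<^sup>+Z. indicator {Z. chain_cost n a1 a2 (Z (2*n)) v Z + (Z (2*n) - b1)\<^sup>2 + (v - b2)\<^sup>2 \<le> D} (Z(2*n := u))
         \<partial>PiM I (\<lambda>_. lborel) \<partial>lborel \<partial>lborel)"
  proof -
    have "indicator {Z. chain_cost n a1 a2 (Z (2*n)) v Z + (Z (2*n) - b1)\<^sup>2 + (v - b2)\<^sup>2 \<le> D}
        \<in> borel_measurable (PiM (insert (2*n) I) (\<lambda>_. lborel))" for v
      by measurable
    then show ?thesis
      by (intro nn_integral_cong product_nn_integral_insert_rev[OF fin]) (auto simp: I_def)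
  qed
  also have "\<dots> = (\<integral>\<^sup>+v. \<integral>\<^sup>+u. \<integral>\<^sup>+Z. indicator {Z. chain_cost n a1 a2 u v Z \<le> D - (u - b1)\<^sup>2 - (v - b2)\<^sup>2} Z
         \<partial>PiM {..<2*n} (\<lambda>_. lborel) \<partial>lborel \<partial>lborel)"
    by (simp add: cost_upd_x indicator_def I_def le_diff_eq add_ac)
  finally show ?thesis .
qed

lemma nn_integral_chain_cost_sublevel:
  "(\<integral>\<^sup>+Z. indicator {Z. chain_cost n a1 a2 b1 b2 Z \<le> D} Z \<partial>PiM {..<2*n} (\<lambda>_. lborel))
   = ennreal (pi ^ n / (fact n * (real n + 1)) *
       (if ((a1-b1)\<^sup>2 + (a2-b2)\<^sup>2) / (real n + 1) \<le> D
        then (D - ((a1-b1)\<^sup>2 + (a2-b2)\<^sup>2) / (real n + 1)) ^ n else 0))"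
proof (induction n arbitrary: b1 b2 D)
  case 0
  then show ?case by (simp add: PiM_empty nn_integral_count_space_finite indicator_def)
next
  case (Suc n)
  define N where "N = real n + 1"
  define q where "q = (N+1)/N"
  define p1 where "p1 = (a1 + N*b1)/(N+1)"
  define p2 where "p2 = (a2 + N*b2)/(N+1)"
  define s where "s = (a1-b1)\<^sup>2 + (a2-b2)\<^sup>2"
  define T where "T = D - s/(N+1)"
  define c where "c = pi ^ n / (fact n * N)"
  have N: "N > 0" by (simp add: N_def)
  have inner: "(\<integral>\<^sup>+Z. indicator {Z. chain_cost n a1 a2 u v Z \<le> D - (u - b1)\<^sup>2 - (v - b2)\<^sup>2} Z
        \<partial>PiM {..<2*n} (\<lambda>_. lborel))
      = ennreal c * ennreal (if q * ((u-p1)\<^sup>2 + (v-p2)\<^sup>2) \<le> T then (T - q * ((u-p1)\<^sup>2 + (v-p2)\<^sup>2)) ^ n else 0)"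
    for u v
  proof -
    have key: "((a1-u)\<^sup>2 + (a2-v)\<^sup>2)/N + (u-b1)\<^sup>2 + (v-b2)\<^sup>2 = q * ((u-p1)\<^sup>2 + (v-p2)\<^sup>2) + s/(N+1)"
      using weighted_squares_complete_square[OF N, of a1 u b1] weighted_squares_complete_square[OF N, of a2 v b2]
      by (simp add: add_divide_distrib distrib_left q_def p1_def p2_def s_def)
    have "(((a1-u)\<^sup>2 + (a2-v)\<^sup>2)/N \<le> D - (u - b1)\<^sup>2 - (v - b2)\<^sup>2) = (q * ((u-p1)\<^sup>2 + (v-p2)\<^sup>2) \<le> T)"
      and "D - (u - b1)\<^sup>2 - (v - b2)\<^sup>2 - ((a1-u)\<^sup>2 + (a2-v)\<^sup>2)/N = T - q * ((u-p1)\<^sup>2 + (v-p2)\<^sup>2)"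
      using key unfolding T_def by linarith+
    then show ?thesis
      unfolding Suc.IH N_def[symmetric] c_def
      by (subst ennreal_mult'[symmetric]) (auto simp: N_def)
  qed
  have "(\<integral>\<^sup>+Z. indicator {Z. chain_cost (Suc n) a1 a2 b1 b2 Z \<le> D} Z \<partial>PiM {..<2 * Suc n} (\<lambda>_. lborel))
      = (\<integral>\<^sup>+v. \<integral>\<^sup>+u. ennreal c * ennreal (if q * ((u-p1)\<^sup>2 + (v-p2)\<^sup>2) \<le> T
          then (T - q * ((u-p1)\<^sup>2 + (v-p2)\<^sup>2)) ^ n else 0) \<partial>lborel \<partial>lborel)"
    unfolding nn_integral_chain_cost_Suc_sublevel inner ..
  also have "\<dots> = ennreal c * (\<integral>\<^sup>+v. \<integral>\<^sup>+u. ennreal (if q * ((u-p1)\<^sup>2 + (v-p2)\<^sup>2) \<le> T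
          then (T - q * ((u-p1)\<^sup>2 + (v-p2)\<^sup>2)) ^ n else 0) \<partial>lborel \<partial>lborel)"
    by (subst nn_integral_cmult[symmetric]) (measurable, simp add: nn_integral_cmult)
  also have "\<dots> = ennreal c * ennreal (if T > 0 then pi * T ^ (n+1) / (q * N) else 0)"
    using N by (subst nn_integral_plane_quadratic_power) (auto simp: q_def N_def)
  also have "\<dots> = ennreal (pi ^ Suc n / (fact (Suc n) * (N + 1)) * (if 0 \<le> T then T ^ Suc n else 0))"
  proof (cases "T > 0")
    case True
    have "fact (Suc n) = N * fact n" "q * N = N + 1"
      using N by (simp_all add: N_def q_def)
    then have "c * (pi * T ^ (n+1) / (q * N)) = pi ^ Suc n / (fact (Suc n) * (N + 1)) * T ^ Suc n"
      by (simp add: c_def field_simps)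
    then show ?thesis
      using True N by (subst ennreal_mult'[symmetric]) (auto simp: c_def)
  next
    case False
    then show ?thesis by (cases "T = 0") auto
  qed
  also have "(0 \<le> T) = (s / (N + 1) \<le> D)"
    by (auto simp: T_def)
  finally show ?case
    by (simp add: N_def s_def T_def)
qed

section \<open>Exponentially weighted integrals over sublevel sets\<close>

lemma indicator_mult_exp_eq_tail_integral:
  assumes "L > 0"
  shows "indicator {..D} x * ennreal (exp (- L * x))
     = ennreal (exp (- L * D)) * indicator {..D} x
       + (\<integral>\<^sup>+t. ennreal (L * exp (- L * t)) * indicator {x..D} t \<partial>lborel)"
proof (cases "x \<le> D")
  case True
  have "(\<integral>\<^sup>+t. ennreal (L * exp (- L * t)) * indicator {x..D} t \<partial>lborel)
      = ennreal (- exp (- L * D) - (- exp (- L * x)))"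
    by (rule nn_integral_FTC_Icc) (use assms True in \<open>auto intro!: derivative_eq_intros\<close>)
  moreover have "exp (- L * D) \<le> exp (- L * x)"
    using assms True by simp
  ultimately show ?thesis
    using True by (simp add: ennreal_plus[symmetric] del: ennreal_plus)
qed simp

lemma nn_integral_exp_sublevel_layer_cake:
  assumes L: "L > 0" and dm[measurable]: "d \<in> borel_measurable M" and sf: "sigma_finite_measure M"
  shows "(\<integral>\<^sup>+Z. indicator {Z. d Z \<le> D} Z * ennreal (exp (- L * d Z)) \<partial>M)
    = ennreal (exp (- L * D)) * (\<integral>\<^sup>+Z. indicator {Z. d Z \<le> D} Z \<partial>M)
      + (\<integral>\<^sup>+t. ennreal (L * exp (- L * t)) * indicator {..D} t * (\<integral>\<^sup>+Z. indicator {Z. d Z \<le> t} Z \<partial>M) \<partial>lborel)"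
proof -
  interpret pair_sigma_finite M lborel
    using sf by (intro pair_sigma_finite.intro) (auto simp: lborel.sigma_finite_measure_axioms)
  have [measurable]: "Measurable.pred (M \<Otimes>\<^sub>M borel) (\<lambda>x. snd x \<in> {d (fst x)..D})"
    unfolding atLeastAtMost_iff by measurable
  have [measurable]: "Measurable.pred (M \<Otimes>\<^sub>M lborel) (\<lambda>x. snd x \<in> {d (fst x)..D})"
    unfolding atLeastAtMost_iff by measurable
  have "(\<integral>\<^sup>+Z. indicator {Z. d Z \<le> D} Z * ennreal (exp (- L * d Z)) \<partial>M)
     = (\<integral>\<^sup>+Z. ennreal (exp (- L * D)) * indicator {Z. d Z \<le> D} Z + (\<integral>\<^sup>+t. ennreal (L * exp (- L * t)) * indicator {d Z..D} t \<partial>lborel) \<partial>M)"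
    using indicator_mult_exp_eq_tail_integral[OF L, of D]
    by (intro nn_integral_cong) (simp add: indicator_def)
  also have "\<dots> = (\<integral>\<^sup>+Z. ennreal (exp (- L * D)) * indicator {Z. d Z \<le> D} Z \<partial>M)
      + (\<integral>\<^sup>+Z. (\<integral>\<^sup>+t. ennreal (L * exp (- L * t)) * indicator {d Z..D} t \<partial>lborel) \<partial>M)"
    by (rule nn_integral_add) measurable
  also have "(\<integral>\<^sup>+Z. ennreal (exp (- L * D)) * indicator {Z. d Z \<le> D} Z \<partial>M)
     = ennreal (exp (- L * D)) * (\<integral>\<^sup>+Z. indicator {Z. d Z \<le> D} Z \<partial>M)"
    by (rule nn_integral_cmult) measurable
  also have "(\<integral>\<^sup>+Z. (\<integral>\<^sup>+t. ennreal (L * exp (- L * t)) * indicator {d Z..D} t \<partial>lborel) \<partial>M)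
     = (\<integral>\<^sup>+t. (\<integral>\<^sup>+Z. ennreal (L * exp (- L * t)) * indicator {d Z..D} t \<partial>M) \<partial>lborel)"
    by (rule Fubini'[symmetric]) measurable
  also have "\<dots> = (\<integral>\<^sup>+t. ennreal (L * exp (- L * t)) * indicator {..D} t * (\<integral>\<^sup>+Z. indicator {Z. d Z \<le> t} Z \<partial>M) \<partial>lborel)"
  proof (intro nn_integral_cong)
    fix t :: real
    have "(\<integral>\<^sup>+Z. ennreal (L * exp (- L * t)) * indicator {d Z..D} t \<partial>M)
       = (\<integral>\<^sup>+Z. (ennreal (L * exp (- L * t)) * indicator {..D} t) * indicator {Z. d Z \<le> t} Z \<partial>M)"
      by (intro nn_integral_cong) (auto simp: indicator_def)
    also have "\<dots> = ennreal (L * exp (- L * t)) * indicator {..D} t * (\<integral>\<^sup>+Z. indicator {Z. d Z \<le> t} Z \<partial>M)"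
      by (rule nn_integral_cmult) measurable
    finally show "(\<integral>\<^sup>+Z. ennreal (L * exp (- L * t)) * indicator {d Z..D} t \<partial>M) = \<dots>" .
  qed
  finally show ?thesis .
qed

lemma nn_integral_exp_shifted_power_eq_erlang_CDF:
  assumes L: "L > 0" and c: "c \<ge> 0"
  shows "(\<integral>\<^sup>+t. ennreal (L * exp (- L * t)) * indicator {..D} t
            * ennreal (c * (if t0 \<le> t then (t - t0) ^ n else 0)) \<partial>lborel)
     = ennreal (c * exp (- L * t0) * fact n / L ^ n * erlang_CDF n L (D - t0))"
proof -
  define C where "C = c * exp (- L * t0) * fact n / L ^ n"
  have C: "C \<ge> 0"
    using L c by (simp add: C_def)
  have "(\<integral>\<^sup>+t. ennreal (L * exp (- L * t)) * indicator {..D} t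
            * ennreal (c * (if t0 \<le> t then (t - t0) ^ n else 0)) \<partial>lborel)
     = (\<integral>\<^sup>+s. ennreal (L * exp (- L * (t0 + 1 * s))) * indicator {..D} (t0 + 1 * s)
            * ennreal (c * (if t0 \<le> t0 + 1 * s then (t0 + 1 * s - t0) ^ n else 0)) \<partial>lborel)"
    by (subst nn_integral_real_affine[where c=1 and t=t0]) auto
  also have "\<dots> = (\<integral>\<^sup>+s. ennreal C * (ennreal (erlang_density n L s) * indicator {..D - t0} s) \<partial>lborel)"
  proof (intro nn_integral_cong)
    fix s :: real
    show "ennreal (L * exp (- L * (t0 + 1 * s))) * indicator {..D} (t0 + 1 * s)
            * ennreal (c * (if t0 \<le> t0 + 1 * s then (t0 + 1 * s - t0) ^ n else 0))
       = ennreal C * (ennreal (erlang_density n L s) * indicator {..D - t0} s)"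
    proof (cases "s \<ge> 0 \<and> t0 + s \<le> D")
      case True
      have "L * exp (- L * (t0 + s)) * (c * s ^ n) = C * erlang_density n L s"
        using True L by (simp add: C_def erlang_density_def field_simps exp_add[symmetric] exp_diff)
      moreover have "L * exp (- L * (t0 + s)) \<ge> 0"
        using L by simp
      ultimately show ?thesis
        using True c C by (simp add: ennreal_mult'[symmetric] indicator_def)
    next
      case False
      then show ?thesis by (auto simp: indicator_def erlang_density_def)
    qed
  qed
  also have "\<dots> = ennreal C * ennreal (erlang_CDF n L (D - t0))"
    by (subst nn_integral_cmult) (auto simp: nn_integral_erlang_density[OF L])
  also have "\<dots> = ennreal (C * erlang_CDF n L (D - t0))"
    using C by (simp add: ennreal_mult')
  finally show ?thesis
    by (simp add: C_def)
qed

lemma nn_integral_exp_sublevel_of_power_volume: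
  fixes d :: "'a \<Rightarrow> real"
  assumes L: "L > 0" and c: "c \<ge> 0" and "t0 \<le> D"
    and [measurable]: "d \<in> borel_measurable M" and "sigma_finite_measure M"
    and volume: "\<And>t. (\<integral>\<^sup>+Z. indicator {Z. d Z \<le> t} Z \<partial>M) = ennreal (c * (if t0 \<le> t then (t - t0) ^ n else 0))"
  shows "(\<integral>\<^sup>+Z. indicator {Z. d Z \<le> D} Z * ennreal (exp (- L * d Z)) \<partial>M)
    = ennreal (c * fact n / L ^ n * (exp (- L * t0) - exp (- L * D) * (\<Sum>i<n. (L * (D - t0)) ^ i / fact i)))"
proof -
  define T where "T = D - t0"
  define S where "S = (\<Sum>i<n. (L * T) ^ i / fact i)"
  have T: "T \<ge> 0" using \<open>t0 \<le> D\<close> by (simp add: T_def)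
  have exp_D: "exp (- L * D) = exp (- L * t0) * exp (- L * T)"
    by (simp add: T_def flip: exp_add) (simp add: algebra_simps)
  have "(\<Sum>i\<le>n. (L * T) ^ i * exp (- L * T) / fact i) = exp (- L * T) * (\<Sum>i\<le>n. (L * T) ^ i / fact i)"
    by (simp add: sum_distrib_left mult_ac)
  then have erlang: "erlang_CDF n L T = 1 - exp (- L * T) * (S + (L * T) ^ n / fact n)"
    using T by (simp add: erlang_CDF_def S_def flip: lessThan_Suc_atMost)
  have closed_form: "exp (- L * D) * (c * T ^ n) + c * exp (- L * t0) * fact n / L ^ n * erlang_CDF n L T
      = c * fact n / L ^ n * (exp (- L * t0) - exp (- L * D) * S)"
    using L unfolding exp_D erlang by (simp add: power_mult_distrib field_simps)
  have "(\<integral>\<^sup>+Z. indicator {Z. d Z \<le> D} Z * ennreal (exp (- L * d Z)) \<partial>M)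
      = ennreal (exp (- L * D)) * ennreal (c * T ^ n)
        + ennreal (c * exp (- L * t0) * fact n / L ^ n * erlang_CDF n L T)"
    unfolding nn_integral_exp_sublevel_layer_cake[OF assms(1,4,5)] volume
      nn_integral_exp_shifted_power_eq_erlang_CDF[OF L c] T_def
    using \<open>t0 \<le> D\<close> by simp
  also have "\<dots> = ennreal (exp (- L * D) * (c * T ^ n) + c * exp (- L * t0) * fact n / L ^ n * erlang_CDF n L T)"
    using L c T by (simp add: ennreal_mult'[symmetric] ennreal_plus[symmetric] del: ennreal_plus)
  finally show ?thesis
    unfolding closed_form by (simp add: S_def T_def)
qed

lemma nn_integral_exp_chain_cost_sublevel:
  fixes L D a1 a2 b1 b2 :: real and n :: nat
  defines "t0 \<equiv> ((a1 - b1)\<^sup>2 + (a2 - b2)\<^sup>2) / (real n + 1)"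
  assumes "L > 0" and "t0 \<le> D"
  shows "(\<integral>\<^sup>+Z. indicator {Z. chain_cost n a1 a2 b1 b2 Z \<le> D} Z
            * ennreal (exp (- L * chain_cost n a1 a2 b1 b2 Z)) \<partial>PiM {..<2*n} (\<lambda>_. lborel))
    = ennreal (pi ^ n / ((real n + 1) * L ^ n)
        * (exp (- L * t0) - exp (- L * D) * (\<Sum>i<n. (L * (D - t0)) ^ i / fact i)))"
proof -
  have "sigma_finite_measure (PiM {..<2*n} (\<lambda>_. lborel :: real measure))"
    by (rule product_sigma_finite.sigma_finite)
      (auto simp: product_sigma_finite_def lborel.sigma_finite_measure_axioms)
  then have "(\<integral>\<^sup>+Z. indicator {Z. chain_cost n a1 a2 b1 b2 Z \<le> D} Z
            * ennreal (exp (- L * chain_cost n a1 a2 b1 b2 Z)) \<partial>PiM {..<2*n} (\<lambda>_. lborel))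
    = ennreal (pi ^ n / (fact n * (real n + 1)) * fact n / L ^ n
        * (exp (- L * t0) - exp (- L * D) * (\<Sum>i<n. (L * (D - t0)) ^ i / fact i)))"
    using assms
    by (intro nn_integral_exp_sublevel_of_power_volume) (auto simp: nn_integral_chain_cost_sublevel)
  also have "pi ^ n / (fact n * (real n + 1)) * fact n / L ^ n = pi ^ n / ((real n + 1) * L ^ n)"
    by simp
  finally show ?thesis .
qed

lemma expected_N_eq_nn_integral_chain_cost:
  assumes "m \<ge> 1" and "G \<ge> 0" and "lam \<ge> 0" and "gam \<le> 1"
  shows "expected_N G K lam gam R m D = ennreal (lam ^ m * (1 - gam) ^ m * G ^ (m+1))
    * (\<integral>\<^sup>+Z. indicator {Z. chain_cost m (-R/2) 0 (R/2) 0 Z \<le> D} Z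
         * ennreal (exp (- (lam * gam * K) * chain_cost m (-R/2) 0 (R/2) 0 Z)) \<partial>PiM {..<2*m} (\<lambda>_. lborel))"
proof -
  have "lam ^ m * (1 - gam) ^ m * G ^ (m+1) \<ge> 0"
    using assms by simp
  then show ?thesis
    unfolding expected_N_def g_m_def d_m_eq_chain_cost[OF \<open>m \<ge> 1\<close>]
    by (subst nn_integral_cmult[symmetric]) (measurable,
        auto intro!: nn_integral_cong simp: ennreal_mult'[symmetric] indicator_def mult_ac)
qed

theorem lemma1:
  fixes G K lam gam R D :: real and m :: nat
  assumes "G > 0" and "K > 0" and "lam > 0" and "0 < gam" and "gam < 1" and "R > 0"
    and "m \<ge> 1" and "D \<ge> R\<^sup>2 / (m + 1)"
  defines "\<kappa> \<equiv> G * pi * (1 - gam) / (gam * K)"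
    and "\<Lambda> \<equiv> lam * gam * K"
  shows "expected_N G K lam gam R m D =
    ennreal (G * \<kappa> ^ m / (m + 1) *
      (exp (- \<Lambda> * R\<^sup>2 / (m + 1))
       - exp (- \<Lambda> * D) * (\<Sum>i=0..m-1. (\<Lambda> * (D - R\<^sup>2 / (m + 1))) ^ i / fact i)))"
proof -
  have \<Lambda>: "\<Lambda> > 0"
    using assms by (simp add: \<Lambda>_def)
  have min_cost: "((-R/2 - R/2)\<^sup>2 + (0 - 0)\<^sup>2) / (real m + 1) = R\<^sup>2 / (real m + 1)"
    by (simp add: power2_eq_square)
  have constants: "lam ^ m * (1 - gam) ^ m * G ^ (m+1) * (pi ^ m / ((real m + 1) * \<Lambda> ^ m))
      = G * \<kappa> ^ m / (real m + 1)"
    using assms unfolding \<kappa>_def \<Lambda>_def power_mult_distrib power_divide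
    by (simp add: divide_simps mult_ac)
  define X where "X = exp (- \<Lambda> * (R\<^sup>2 / (real m + 1)))
    - exp (- \<Lambda> * D) * (\<Sum>i<m. (\<Lambda> * (D - R\<^sup>2 / (real m + 1))) ^ i / fact i)"
  have "expected_N G K lam gam R m D
      = ennreal (lam ^ m * (1 - gam) ^ m * G ^ (m+1)) * ennreal (pi ^ m / ((real m + 1) * \<Lambda> ^ m) * X)"
    using assms \<Lambda> nn_integral_exp_chain_cost_sublevel[of \<Lambda> "-R/2" "R/2" 0 0 m D]
    by (simp add: expected_N_eq_nn_integral_chain_cost min_cost X_def \<Lambda>_def add.commute)
  also have "\<dots> = ennreal (G * \<kappa> ^ m / (real m + 1) * X)"
    using assms(1,3,5)
    by (subst ennreal_mult'[symmetric]) (simp_all only: mult.assoc[symmetric] constants, simp)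
  moreover have "{..<m} = {0..m-1}"
    using \<open>m \<ge> 1\<close> by auto
  then have "X = exp (- \<Lambda> * R\<^sup>2 / (m + 1))
      - exp (- \<Lambda> * D) * (\<Sum>i=0..m-1. (\<Lambda> * (D - R\<^sup>2 / (m + 1))) ^ i / fact i)"
    by (simp add: X_def add.commute)
  ultimately show ?thesis
    by (simp add: add.commute)
qed

end
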